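(* Let $\Gamma=\mathsf{PSL}_2(\mathbb{Z})=\langle U,S\mid U^3,S^2\rangle$, with $U$ of order $3$ and $S$ of order $2$. For $n\ge 0$ let $t(n)$ be the number of words of length $n$ in the alphabet $\{U,S\}$ that are equal to the identity in $\Gamma$. Then for every prime $p>3$, $t(p)\equiv 0 \pmod p$.
   Context: A word of length $n$ is a sequence of $n$ letters each equal to $U$ or $S$, read as the product of the corresponding elements of $\Gamma$. *)

theory Defs
  imports "HOL-Analysis.Analysis"
begin

text \<open>Gamma = PSL_2(Z) realised as SL_2(Z) modulo {I, -I}.  The generators
U (order 3 in PSL_2(Z)) and S (order 2) are the standard matrix representatives
U = [[0,-1],[1,1]], S = [[0,-1],[1,0]]; they give the presentation <U,S | U^3, S^2>.\<close>

datatype letter = LU | LS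

definition matU :: "int^2^2" where
  "matU = vector [vector [0, -1], vector [1, 1]]"

definition matS :: "int^2^2" where
  "matS = vector [vector [0, -1], vector [1, 0]]"

fun letter_mat :: "letter \<Rightarrow> int^2^2" where
  "letter_mat LU = matU"
| "letter_mat LS = matS"

definition word_mat :: "letter list \<Rightarrow> int^2^2" where
  "word_mat w = foldr (\<lambda>l M. letter_mat l ** M) w (mat 1)"

definition word_is_id :: "letter list \<Rightarrow> bool" where
  "word_is_id w \<longleftrightarrow> word_mat w = mat 1 \<or> word_mat w = - mat 1"

definition t :: "nat \<Rightarrow> nat" where
  "t n = card {w :: letter list. length w = n \<and> word_is_id w}"

end

theory Submission
  imports Defs
begin

text \<open>Rotating a word conjugates its matrix by a letter matrix, and \<open>\<plusminus>I\<close> is central, so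
rotation permutes the identity words of length \<open>p\<close>. For \<open>p\<close> prime, a word fixed by a
nontrivial rotation is fixed by all of them, hence is \<open>U\<^sup>p\<close> or \<open>S\<^sup>p\<close>; neither is the identity
because \<open>2\<close> and \<open>3\<close> do not divide \<open>p\<close>. Thus the identity words fall into rotation orbits
of size exactly \<open>p\<close>.\<close>

lemma matrix_mul_uminus_left: "(- A) ** B = - (A ** B)"
  for A :: "'a::ring_1^'n^'m" and B :: "'a^'k^'n"
  by (simp add: vec_eq_iff matrix_matrix_mult_def sum_negf)

lemma matrix_mul_uminus_right: "A ** (- B) = - (A ** B)"
  for A :: "'a::ring_1^'n^'m" and B :: "'a^'k^'n"
  by (simp add: vec_eq_iff matrix_matrix_mult_def sum_negf)

lemma matrix_mul_sign_commute:
  fixes A B N :: "'a::comm_ring_1^'n^'n"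
  assumes "N ** A = mat 1" and "A ** B = c" and "c = mat 1 \<or> c = - mat 1"
  shows "B ** A = c"
proof -
  have "B ** A = N ** (A ** B) ** A"
    using assms(1) by (simp add: matrix_mul_assoc)
  also have "\<dots> = c"
    using assms by (auto simp: matrix_mul_uminus_left matrix_mul_uminus_right)
  finally show ?thesis .
qed

definition rotations :: "'a list \<Rightarrow> 'a list set" where
  "rotations w = range (\<lambda>n. rotate n w)"

lemma rotate_mem_rotations: "rotate n w \<in> rotations w"
  by (simp add: rotations_def)

lemma rotations_eq_image:
  assumes "w \<noteq> []"
  shows "rotations w = (\<lambda>n. rotate n w) ` {..<length w}"
proof
  have "rotate n w \<in> (\<lambda>n. rotate n w) ` {..<length w}" for n
    using assms rotate_conv_mod[of n w] by (intro image_eqI[of _ _ "n mod length w"]) simp_all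
  then show "rotations w \<subseteq> (\<lambda>n. rotate n w) ` {..<length w}"
    by (auto simp: rotations_def)
qed (auto simp: rotations_def)

lemma rotate_undo: "rotate (length w - n mod length w) (rotate n w) = w"
proof (cases "w = []")
  case False
  let ?L = "length w"
  have "n mod ?L < ?L"
    using False by simp
  then have "?L - n mod ?L + n = ?L * (n div ?L) + ?L"
    using mult_div_mod_eq[of ?L n] by linarith
  then have "(?L - n mod ?L + n) mod ?L = 0"
    by simp
  then show ?thesis
    by (simp add: rotate_rotate)
qed simp

lemma rotations_rotate: "rotations (rotate n w) = rotations w"
proof
  show "rotations (rotate n w) \<subseteq> rotations w"
    by (auto simp: rotations_def rotate_rotate)
  show "rotations w \<subseteq> rotations (rotate n w)"
  proof
    fix u assume "u \<in> rotations w"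
    then obtain m where "u = rotate m w"
      by (auto simp: rotations_def)
    also have "\<dots> = rotate (m + (length w - n mod length w)) (rotate n w)"
      by (metis rotate_rotate rotate_undo)
    finally show "u \<in> rotations (rotate n w)"
      by (simp add: rotate_mem_rotations)
  qed
qed

lemma rotate1_eq_self_if_rotate_eq_self:
  assumes "prime (length w)" and "rotate n w = w" and "\<not> length w dvd n"
  shows "rotate1 w = w"
proof -
  let ?p = "length w"
  have "coprime n ?p"
    using assms by (metis coprime_commute prime_imp_coprime)
  moreover have "n \<noteq> 0"
    using assms(3) by (metis dvd_0_right)
  ultimately obtain m k where "n * m = ?p * k + 1"
    using bezout_nat[of n ?p] by auto
  then have "(n * m) mod ?p = 1"
    using prime_gt_1_nat[OF assms(1)] by (metis add.commute mult.commute mod_mult_self1 mod_less)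
  have "rotate (n * j) w = w" for j
    by (induction j) (simp_all add: rotate_rotate[symmetric] assms(2) add.commute)
  then have "rotate ((n * m) mod ?p) w = w"
    by (simp add: rotate_conv_mod[symmetric])
  then show ?thesis
    using \<open>(n * m) mod ?p = 1\<close> by simp
qed

lemma card_rotations_prime:
  assumes "prime (length w)" and "rotate1 w \<noteq> w"
  shows "card (rotations w) = length w"
proof -
  have "inj_on (\<lambda>n. rotate n w) {..<length w}"
  proof (rule linorder_inj_onI')
    fix i j assume "i \<in> {..<length w}" "j \<in> {..<length w}" "i < j"
    show "rotate i w \<noteq> rotate j w"
    proof
      assume eq: "rotate i w = rotate j w"
      let ?v = "rotate i w"
      have "rotate (j - i) ?v = rotate j w"
        using \<open>i < j\<close> by (simp add: rotate_rotate)
      then have "rotate (j - i) ?v = ?v"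
        using eq by metis
      moreover have "\<not> length ?v dvd (j - i)"
        using \<open>i < j\<close> \<open>j \<in> {..<length w}\<close> by (auto dest: dvd_imp_le)
      ultimately have "rotate1 ?v = ?v"
        using assms(1) by (intro rotate1_eq_self_if_rotate_eq_self) simp_all
      then have "rotate i (rotate1 w) = rotate i w"
        by (simp add: rotate1_rotate_swap)
      moreover have "inj (rotate i :: 'a list \<Rightarrow> 'a list)"
        by (simp add: rotate_def inj_rotate1)
      ultimately show False
        using assms(2) by (simp add: inj_eq)
    qed
  qed
  moreover have "w \<noteq> []"
    using assms(1) by auto
  ultimately show ?thesis
    by (simp add: rotations_eq_image card_image)
qed

lemma prime_dvd_card_if_rotate1_free:
  assumes "prime p" and "finite A"
    and "\<And>w. w \<in> A \<Longrightarrow> length w = p"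
    and "\<And>w. w \<in> A \<Longrightarrow> rotate1 w \<in> A"
    and "\<And>w. w \<in> A \<Longrightarrow> rotate1 w \<noteq> w"
  shows "p dvd card A"
proof -
  have "rotate n w \<in> A" if "w \<in> A" for w n
    using that by (induction n) (simp_all add: assms(4))
  then have rotations_sub: "rotations w \<subseteq> A" if "w \<in> A" for w
    using that by (auto simp: rotations_def)
  have "w \<in> rotations w" for w :: "'a list"
    using rotate_mem_rotations[of 0 w] by simp
  then have cover: "\<Union> (rotations ` A) = A"
    using rotations_sub by blast
  have "p dvd card (\<Union> (rotations ` A))"
  proof (rule dvd_partition)
    show "finite (\<Union> (rotations ` A))"
      using cover assms(2) by simp
    show "\<forall>c\<in>rotations ` A. p dvd card c"
      using assms(1,3,5) by (auto simp: card_rotations_prime)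
    have "rotations w = rotations w'" if u: "u \<in> rotations w" "u \<in> rotations w'" for u w w'
    proof -
      obtain a b where "u = rotate a w" and "u = rotate b w'"
        using u unfolding rotations_def by blast
      then show ?thesis
        by (metis rotations_rotate)
    qed
    then show "\<forall>c\<in>rotations ` A. \<forall>c'\<in>rotations ` A. c \<noteq> c' \<longrightarrow> c \<inter> c' = {}"
      by blast
  qed
  then show ?thesis
    using cover by simp
qed

lemma rotate1_fixed_replicate:
  assumes "rotate1 w = w"
  shows "w = replicate (length w) (hd w)"
proof (cases "w = []")
  case False
  then obtain x where "set w = {x}"
    using rotate1_fixpoint_card[OF assms] card_1_singletonE by blast
  moreover have "hd w \<in> set w"
    using False by simp
  ultimately show ?thesis
    by (simp add: replicate_length_same)
qed simp

lemmas matrix_2x2_simps = vec_eq_iff matrix_matrix_mult_def sum_2 forall_2 mat_def matU_def matS_def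

lemma matU_cube: "matU ** matU ** matU = - mat 1"
  by (simp add: matrix_2x2_simps)

lemma matS_square: "matS ** matS = - mat 1"
  by (simp add: matrix_2x2_simps)

lemma matU_neq_sign: "matU \<noteq> mat 1" "matU \<noteq> - mat 1" "matU ** matU \<noteq> mat 1" "matU ** matU \<noteq> - mat 1"
  by (simp_all add: matrix_2x2_simps)

lemma matS_neq_sign: "matS \<noteq> mat 1" "matS \<noteq> - mat 1"
  by (simp_all add: matrix_2x2_simps)

lemma letter_mat_left_inverse: "\<exists>N. N ** letter_mat l = mat 1"
proof (cases l)
  case LU
  have "(- (matU ** matU)) ** matU = mat 1"
    by (simp add: matrix_mul_uminus_left matU_cube)
  then show ?thesis using LU by auto
next
  case LS
  have "(- matS) ** matS = mat 1"
    by (simp add: matrix_mul_uminus_left matS_square)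
  then show ?thesis using LS by auto
qed

lemma word_mat_Nil [simp]: "word_mat [] = mat 1"
  by (simp add: word_mat_def)

lemma word_mat_Cons [simp]: "word_mat (l # w) = letter_mat l ** word_mat w"
  by (simp add: word_mat_def)

lemma word_mat_append: "word_mat (v @ w) = word_mat v ** word_mat w"
  by (induction v) (simp_all add: matrix_mul_assoc)

lemma word_is_id_rotate1:
  assumes "word_is_id w"
  shows "word_is_id (rotate1 w)"
proof (cases w)
  case (Cons l v)
  obtain N where "N ** letter_mat l = mat 1"
    using letter_mat_left_inverse by blast
  moreover have "letter_mat l ** word_mat v = word_mat w"
    using Cons by simp
  moreover have "word_mat w = mat 1 \<or> word_mat w = - mat 1"
    using assms by (simp add: word_is_id_def)
  ultimately have "word_mat v ** letter_mat l = word_mat w"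
    by (rule matrix_mul_sign_commute)
  then show ?thesis
    using assms Cons by (simp add: word_is_id_def word_mat_append)
qed (simp add: word_is_id_def)

lemma word_is_id_replicate_shift:
  assumes "word_mat (replicate k l) = - mat 1"
  shows "word_is_id (replicate (k + n) l) \<longleftrightarrow> word_is_id (replicate n l)"
  using assms
  by (auto simp: word_is_id_def replicate_add word_mat_append matrix_mul_uminus_left
      minus_equation_iff)

lemma word_is_id_replicate_LU: "word_is_id (replicate n LU) \<longleftrightarrow> 3 dvd n"
proof (induction n rule: less_induct)
  case (less n)
  show ?case
  proof (cases "n < 3")
    case True
    then consider "n = 0" | "n = 1" | "n = 2" by linarith
    moreover have "replicate 2 LU = [LU, LU]"
      by (simp add: numeral_2_eq_2)
    ultimately show ?thesis
      using matU_neq_sign by cases (auto simp: word_is_id_def)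
  next
    case False
    have "word_mat (replicate 3 LU) = - mat 1"
      by (simp add: numeral_3_eq_3 matrix_mul_assoc matU_cube)
    then have "word_is_id (replicate n LU) \<longleftrightarrow> word_is_id (replicate (n - 3) LU)"
      using word_is_id_replicate_shift[of 3 LU "n - 3"] False by (metis le_add_diff_inverse not_less)
    moreover have "3 dvd n \<longleftrightarrow> 3 dvd (n - 3)"
      using False by presburger
    moreover have "word_is_id (replicate (n - 3) LU) \<longleftrightarrow> 3 dvd (n - 3)"
      using False by (intro less.IH) simp
    ultimately show ?thesis
      by blast
  qed
qed

lemma word_is_id_replicate_LS: "word_is_id (replicate n LS) \<longleftrightarrow> 2 dvd n"
proof (induction n rule: less_induct)
  case (less n)
  show ?case
  proof (cases "n < 2")
    case True
    then have "n = 0 \<or> n = 1" by auto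
    then show ?thesis
      using matS_neq_sign by (auto simp: word_is_id_def)
  next
    case False
    have "word_mat (replicate 2 LS) = - mat 1"
      by (simp add: numeral_2_eq_2 matS_square)
    then have "word_is_id (replicate n LS) \<longleftrightarrow> word_is_id (replicate (n - 2) LS)"
      using word_is_id_replicate_shift[of 2 LS "n - 2"] False by (metis le_add_diff_inverse not_less)
    moreover have "2 dvd n \<longleftrightarrow> 2 dvd (n - 2)"
      using False by presburger
    moreover have "word_is_id (replicate (n - 2) LS) \<longleftrightarrow> 2 dvd (n - 2)"
      using False by (intro less.IH) simp
    ultimately show ?thesis
      by blast
  qed
qed

instance letter :: finite
proof
  have "(UNIV :: letter set) = {LU, LS}"
    using letter.exhaust by blast
  then show "finite (UNIV :: letter set)"
    by (metis finite.emptyI finite_insert)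
qed

theorem proposition1:
  fixes p :: nat
  assumes "prime p" and "p > 3"
  shows "t p mod p = 0"
proof -
  let ?A = "{w :: letter list. length w = p \<and> word_is_id w}"
  have "\<not> 2 dvd p" and "\<not> 3 dvd p"
    using assms by (auto simp: prime_nat_iff)
  have "rotate1 w \<noteq> w" if "w \<in> ?A" for w
  proof
    assume "rotate1 w = w"
    then have "word_is_id (replicate p (hd w))"
      using that rotate1_fixed_replicate[of w] by (metis (mono_tags, lifting) mem_Collect_eq)
    then show False
      using \<open>\<not> 2 dvd p\<close> \<open>\<not> 3 dvd p\<close>
      by (cases "hd w") (simp_all add: word_is_id_replicate_LU word_is_id_replicate_LS)
  qed
  moreover have "finite ?A"
    by (rule finite_subset[OF _ finite_lists_length_eq[of UNIV p]]) auto
  ultimately have "p dvd card ?A"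
    using assms(1) word_is_id_rotate1 by (intro prime_dvd_card_if_rotate1_free) auto
  then show ?thesis
    by (simp add: t_def)
qed

end
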